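(* Let $n\ge 2$. The function $\mathbf{H}:[0,1]^n\to[0,1]$ has no neutral element, i.e. there is no $e\in[0,1]$ such that $\mathbf{H}(e,\dots,e,t,e,\dots,e)=t$ for every $t\in[0,1]$ placed at any coordinate.
   Context: For $\mathbf{x}\in[0,1]^n$ let $x_{(1)}\ge\dots\ge x_{(n)}$ be its entries in decreasing order, and define the median $Med(\mathbf{x})=\frac12(x_{(k)}+x_{(k+1)})$ if $n=2k$ and $Med(\mathbf{x})=x_{(k+1)}$ if $n=2k+1$. Define $f_i(\mathbf{x})=\frac1n$ if $x_1=\dots=x_n$, and otherwise $f_i(\mathbf{x})=\frac{1}{n-1}\Big(1-\frac{|x_i-Med(\mathbf{x})|}{\sum_{j=1}^n|x_j-Med(\mathbf{x})|}\Big)$. Then $\mathbf{H}(\mathbf{x})=\sum_{i=1}^n f_i(\mathbf{x})\,x_i$. *)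

theory Defs
  imports Complex_Main
begin

text \<open>Vectors in [0,1]^n are represented as functions x :: nat => real,
  with coordinates x 0, ..., x (n-1) (coordinate i of the paper is x (i-1)).\<close>

text \<open>Entries in decreasing order: x_(j) = dec_order n x ! (j-1).\<close>
definition dec_order :: "nat \<Rightarrow> (nat \<Rightarrow> real) \<Rightarrow> real list" where
  "dec_order n x = rev (sort (map x [0..<n]))"

definition Med :: "nat \<Rightarrow> (nat \<Rightarrow> real) \<Rightarrow> real" where
  "Med n x = (let ds = dec_order n x; k = n div 2 in
     if even n then (ds ! (k - 1) + ds ! k) / 2 else ds ! k)"

definition fw :: "nat \<Rightarrow> (nat \<Rightarrow> real) \<Rightarrow> nat \<Rightarrow> real" where
  "fw n x i = (if (\<forall>j<n. x j = x 0) then 1 / real n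
     else (1 / (real n - 1)) *
          (1 - \<bar>x i - Med n x\<bar> / (\<Sum>j<n. \<bar>x j - Med n x\<bar>)))"

definition H :: "nat \<Rightarrow> (nat \<Rightarrow> real) \<Rightarrow> real" where
  "H n x = (\<Sum>i<n. fw n x i * x i)"

end

theory Submission
  imports Defs "HOL-Library.Multiset"
begin

text \<open>A neutral element e would give H(t, e, ..., e) = t for some t \<noteq> e. For n = 2 the
  median is the midpoint, both weights are 1/2 and H is the arithmetic mean (t + e)/2.
  For n \<ge> 3 the median of (t, e, ..., e) is e, so the deviating entry t carries all the
  absolute deviation and gets weight 0, leaving H = e.\<close>

lemma Med_two: "Med 2 x = (x 0 + x 1) / 2"
  by (cases "x 0 \<le> x 1") (auto simp: Med_def dec_order_def numeral_2_eq_2)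

lemma fw_two:
  assumes "i < 2"
  shows "fw 2 x i = 1 / 2"
proof (cases "x 1 = x 0")
  case False
  have dev: "\<bar>x j - Med 2 x\<bar> = \<bar>x 1 - x 0\<bar> / 2" if "j < 2" for j
    using that by (auto simp: Med_two less_2_cases_iff abs_if field_simps)
  have "(\<Sum>j<2. \<bar>x j - Med 2 x\<bar>) = \<bar>x 1 - x 0\<bar>"
    using dev[of 0] dev[of 1] by (simp add: eval_nat_numeral)
  moreover have "\<not> (\<forall>j<2. x j = x 0)"
    using False by (auto intro!: exI[of _ 1])
  ultimately show ?thesis
    using False dev[OF assms] by (simp add: fw_def)
qed (use assms in \<open>auto simp: fw_def less_2_cases_iff\<close>)

lemma H_two: "H 2 x = (x 0 + x 1) / 2"
proof -
  have "H 2 x = fw 2 x 0 * x 0 + fw 2 x 1 * x 1"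
    by (simp add: H_def eval_nat_numeral)
  then show ?thesis
    by (simp add: fw_two)
qed

lemma dec_order_single_deviation:
  "dec_order (Suc m) (\<lambda>j. if j = 0 then t else e) =
     (if t \<le> e then replicate m e @ [t] else t # replicate m e)"
proof -
  have "map (\<lambda>j. if j = 0 then t else e) [0..<Suc m] = t # replicate m e"
    by (rule nth_equalityI) (auto simp: nth_Cons split: nat.split simp del: upt_Suc)
  moreover have "sort (t # replicate m e) =
      (if t \<le> e then t # replicate m e else replicate m e @ [t])"
    by (rule properties_for_sort) (auto simp: sorted_append)
  ultimately show ?thesis
    by (simp add: dec_order_def)
qed

lemma Med_single_deviation:
  assumes "m \<ge> 2"
  shows "Med (Suc m) (\<lambda>j. if j = 0 then t else e) = e"
proof -
  let ?ds = "dec_order (Suc m) (\<lambda>j. if j = 0 then t else e)"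
  have inner: "?ds ! i = e" if "1 \<le> i" "i < m" for i
    using that by (auto simp: dec_order_single_deviation nth_append nth_Cons split: nat.split)
  show ?thesis
  proof (cases "even (Suc m)")
    case True
    then have "2 \<le> Suc m div 2" "Suc m div 2 < m"
      using assms by presburger+
    with True show ?thesis
      by (simp add: Med_def Let_def inner)
  next
    case False
    then have "1 \<le> Suc m div 2" "Suc m div 2 < m"
      using assms by presburger+
    with False show ?thesis
      by (simp add: Med_def Let_def inner)
  qed
qed

lemma H_single_deviation:
  assumes "m \<ge> 2"
  shows "H (Suc m) (\<lambda>j. if j = 0 then t else e) = e"
proof (cases "t = e")
  case True
  have "H (Suc m) (\<lambda>j. if j = 0 then t else e) = real (Suc m) * (1 / real (Suc m) * e)"
    unfolding True by (simp add: H_def fw_def del: sum.lessThan_Suc)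
  then show ?thesis
    by simp
next
  case False
  let ?x = "\<lambda>j::nat. if j = 0 then t else e"
  have nonconst: "\<not> (\<forall>j<Suc m. ?x j = ?x 0)"
    using assms False by (auto intro!: exI[of _ 1])
  have total_dev: "(\<Sum>j<Suc m. \<bar>?x j - Med (Suc m) ?x\<bar>) = \<bar>t - e\<bar>"
    using assms by (simp add: Med_single_deviation sum.lessThan_Suc_shift del: sum.lessThan_Suc)
  have "fw (Suc m) ?x 0 = 0"
    using nonconst total_dev False assms by (simp add: fw_def Med_single_deviation)
  moreover have "fw (Suc m) ?x (Suc i) = 1 / real m" for i
    using nonconst total_dev assms by (simp add: fw_def Med_single_deviation)
  ultimately have "H (Suc m) ?x = real m * (1 / real m * e)"
    by (simp add: H_def sum.lessThan_Suc_shift del: sum.lessThan_Suc)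
  then show ?thesis
    using assms by simp
qed

theorem proposition12:
  fixes n :: nat
  assumes "n \<ge> 2"
  shows "\<not> (\<exists>e\<in>{0..1::real}. \<forall>i<n. \<forall>t\<in>{0..1::real}.
             H n (\<lambda>j. if j = i then t else e) = t)"
proof
  assume "\<exists>e\<in>{0..1::real}. \<forall>i<n. \<forall>t\<in>{0..1::real}.
             H n (\<lambda>j. if j = i then t else e) = t"
  then obtain e :: real
    where neutral: "\<And>t. t \<in> {0..1} \<Longrightarrow> H n (\<lambda>j. if j = 0 then t else e) = t"
    using assms by fastforce
  define t :: real where "t = (if e = 0 then 1 else 0)"
  have "t \<in> {0..1}" "t \<noteq> e"
    by (auto simp: t_def)
  then have H_eq: "H n (\<lambda>j. if j = 0 then t else e) = t"
    using neutral by blast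
  show False
  proof (cases "n = 2")
    case True
    then show ?thesis
      using H_eq H_two[of "\<lambda>j. if j = 0 then t else e"] \<open>t \<noteq> e\<close> by simp
  next
    case False
    then have "n = Suc (n - 1)" "n - 1 \<ge> 2"
      using assms by auto
    then show ?thesis
      using H_eq H_single_deviation[of "n - 1" t e] \<open>t \<noteq> e\<close> by simp
  qed
qed

end
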